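(* Let $G_1,\ldots,G_n$ be finite non-empty vertex-transitive graphs ordered so that \[\tfrac12\geq\frac{\alpha(G_1)}{|V(G_1)|}=\cdots=\frac{\alpha(G_\ell)}{|V(G_\ell)|}>\frac{\alpha(G_{\ell+1})}{|V(G_{\ell+1})|}\geq\cdots\geq\frac{\alpha(G_n)}{|V(G_n)|},\] where $1\le \ell<n$. Let $H_0=G_1\times\cdots\times G_\ell$ and $G=G_1\times\cdots\times G_n$. Then $G$ is MIS-normal if and only if $H_0$ is MIS-normal and $G_{\ell+1},\ldots,G_n$ are all connected.
   Context: All graphs are finite and simple; a graph is non-empty if it has at least one edge; $\alpha(\cdot)$ is the independence number. The direct product $G\times H$ has vertex set $V(G)\times V(H)$, with $(u_1,v_1)$ adjacent to $(u_2,v_2)$ iff $u_1u_2\in E(G)$ and $v_1v_2\in E(H)$; it is associative, so products of several graphs are well defined. A product $G_1\times\cdots\times G_m$ is called MIS-normal if every maximum independent set of it is the preimage, under the projection onto some factor $G_i$, of an independent set of $G_i$; by convention a product with a single factor ($m=1$) is MIS-normal. *)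

theory Defs
  imports Complex_Main "HOL-Library.FuncSet"
begin

definition simple_graph :: "'v set \<Rightarrow> ('v \<Rightarrow> 'v \<Rightarrow> bool) \<Rightarrow> bool" where
  "simple_graph V E \<longleftrightarrow> finite V \<and>
     (\<forall>u w. E u w \<longrightarrow> u \<in> V \<and> w \<in> V) \<and>
     (\<forall>u w. E u w \<longrightarrow> E w u) \<and> (\<forall>u. \<not> E u u)"

definition nonempty_graph :: "'v set \<Rightarrow> ('v \<Rightarrow> 'v \<Rightarrow> bool) \<Rightarrow> bool" where
  "nonempty_graph V E \<longleftrightarrow> (\<exists>u\<in>V. \<exists>w\<in>V. E u w)"

definition graph_automorphism :: "'v set \<Rightarrow> ('v \<Rightarrow> 'v \<Rightarrow> bool) \<Rightarrow> ('v \<Rightarrow> 'v) \<Rightarrow> bool" where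
  "graph_automorphism V E f \<longleftrightarrow> bij_betw f V V \<and>
     (\<forall>u\<in>V. \<forall>w\<in>V. E u w \<longleftrightarrow> E (f u) (f w))"

definition vertex_transitive :: "'v set \<Rightarrow> ('v \<Rightarrow> 'v \<Rightarrow> bool) \<Rightarrow> bool" where
  "vertex_transitive V E \<longleftrightarrow>
     (\<forall>u\<in>V. \<forall>w\<in>V. \<exists>f. graph_automorphism V E f \<and> f u = w)"

definition connected_graph :: "'v set \<Rightarrow> ('v \<Rightarrow> 'v \<Rightarrow> bool) \<Rightarrow> bool" where
  "connected_graph V E \<longleftrightarrow> (\<forall>u\<in>V. \<forall>w\<in>V. (\<lambda>x y. x \<in> V \<and> y \<in> V \<and> E x y)\<^sup>*\<^sup>* u w)"

definition independent_set :: "'v set \<Rightarrow> ('v \<Rightarrow> 'v \<Rightarrow> bool) \<Rightarrow> 'v set \<Rightarrow> bool" where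
  "independent_set V E S \<longleftrightarrow> S \<subseteq> V \<and> (\<forall>u\<in>S. \<forall>w\<in>S. \<not> E u w)"

definition indep_number :: "'v set \<Rightarrow> ('v \<Rightarrow> 'v \<Rightarrow> bool) \<Rightarrow> nat" where
  "indep_number V E = Max (card ` {S. independent_set V E S})"

definition max_independent_set :: "'v set \<Rightarrow> ('v \<Rightarrow> 'v \<Rightarrow> bool) \<Rightarrow> 'v set \<Rightarrow> bool" where
  "max_independent_set V E S \<longleftrightarrow> independent_set V E S \<and> card S = indep_number V E"

definition prod_V :: "nat set \<Rightarrow> (nat \<Rightarrow> 'a set) \<Rightarrow> (nat \<Rightarrow> 'a) set" where
  "prod_V I V = PiE I V"

definition prod_E :: "nat set \<Rightarrow> (nat \<Rightarrow> 'a \<Rightarrow> 'a \<Rightarrow> bool) \<Rightarrow> (nat \<Rightarrow> 'a) \<Rightarrow> (nat \<Rightarrow> 'a) \<Rightarrow> bool" where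
  "prod_E I E x y \<longleftrightarrow> (\<forall>i\<in>I. E i (x i) (y i))"

text \<open>By convention a single-factor product is MIS-normal.\<close>
definition MIS_normal :: "nat set \<Rightarrow> (nat \<Rightarrow> 'a set) \<Rightarrow> (nat \<Rightarrow> 'a \<Rightarrow> 'a \<Rightarrow> bool) \<Rightarrow> bool" where
  "MIS_normal I V E \<longleftrightarrow> card I = 1 \<or>
     (\<forall>S. max_independent_set (prod_V I V) (prod_E I E) S \<longrightarrow>
        (\<exists>i\<in>I. \<exists>T. independent_set (V i) (E i) T \<and>
                   S = {x \<in> prod_V I V. x i \<in> T}))"

end

theory Submission
  imports Defs
begin

(* Zhang's theorem: for vertex-transitive G and H, alpha(G x H) = max(alpha(G) |H|, alpha(H) |G|),
   and if alpha(H)/|H| < alpha(G)/|G| and H is connected, every maximum independent set of G x H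
   is J x V(H) with J maximum in G. The only property of a factor the proof uses is that an
   independent set A fills at most the fraction alpha/|V| of its closed neighbourhood N[A]; for a
   vertex-transitive graph this follows by averaging |N[A] \<inter> f(J)| over all automorphisms f.

   Adding the factors G_(l+1), ..., G_n one at a time, each of ratio smaller than that of H_0,
   shows that if they are connected the maximum independent sets of G are exactly the cylinders
   over those of H_0, so MIS-normality passes from H_0 to G. Conversely, lifting shows that
   MIS-normality of G forces that of H_0, and if some G_k with k > l splits into a part C closed
   under adjacency and its complement, taking two different maximum independent sets of G_1 over
   C and over its complement yields a maximum independent set of G that is not the preimage of
   an independent set of one factor. *)

lemma finite_independent_sets: "finite V \<Longrightarrow> finite {S. independent_set V E S}"
  by (rule finite_subset[of _ "Pow V"]) (auto simp: independent_set_def)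

lemma card_le_indep_number:
  assumes "finite V" "independent_set V E S"
  shows "card S \<le> indep_number V E"
  unfolding indep_number_def using assms finite_independent_sets[OF assms(1)] by (intro Max_ge) auto

lemma max_independent_set_exists:
  assumes "finite V"
  obtains J where "max_independent_set V E J"
proof -
  have "{} \<in> {S. independent_set V E S}" by (simp add: independent_set_def)
  then have "indep_number V E \<in> card ` {S. independent_set V E S}"
    unfolding indep_number_def using finite_independent_sets[OF assms] by (intro Max_in) auto
  then show ?thesis using that unfolding max_independent_set_def by auto
qed

lemma indep_number_le_card: "finite V \<Longrightarrow> indep_number V E \<le> card V"
  by (metis max_independent_set_exists max_independent_set_def independent_set_def card_mono)

lemma max_independent_setI:
  "finite V \<Longrightarrow> independent_set V E S \<Longrightarrow> indep_number V E \<le> card S \<Longrightarrow> max_independent_set V E S"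
  unfolding max_independent_set_def using card_le_indep_number by (metis le_antisym)

lemma max_independent_set_subset: "max_independent_set V E S \<Longrightarrow> S \<subseteq> V"
  by (simp add: max_independent_set_def independent_set_def)

locale graph_iso =
  fixes V1 :: "'a set" and E1 and V2 :: "'b set" and E2 and \<phi> :: "'a \<Rightarrow> 'b"
  assumes bij: "bij_betw \<phi> V1 V2"
    and adj_iff: "\<And>u w. u \<in> V1 \<Longrightarrow> w \<in> V1 \<Longrightarrow> E1 u w \<longleftrightarrow> E2 (\<phi> u) (\<phi> w)"
    and finite_V1: "finite V1"
begin

lemma finite_V2: "finite V2"
  using bij finite_V1 bij_betw_finite by blast

lemma inj: "inj_on \<phi> V1"
  using bij bij_betw_def by blast

lemma card_image: "S \<subseteq> V1 \<Longrightarrow> card (\<phi> ` S) = card S"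
  using inj by (intro card_image) (rule inj_on_subset)

lemma independent_set_image: "independent_set V1 E1 S \<Longrightarrow> independent_set V2 E2 (\<phi> ` S)"
  using bij adj_iff unfolding independent_set_def bij_betw_def by (auto, blast)

lemma independent_set_vimage:
  "independent_set V2 E2 S \<Longrightarrow> independent_set V1 E1 {x \<in> V1. \<phi> x \<in> S}"
  using adj_iff unfolding independent_set_def by auto

lemma card_vimage: "S \<subseteq> V2 \<Longrightarrow> card {x \<in> V1. \<phi> x \<in> S} = card S"
proof -
  assume "S \<subseteq> V2"
  then have "\<phi> ` {x \<in> V1. \<phi> x \<in> S} = S" using bij unfolding bij_betw_def by auto
  then show ?thesis using card_image[of "{x \<in> V1. \<phi> x \<in> S}"] by auto
qed

lemma vimage_image_eq: "S \<subseteq> V1 \<Longrightarrow> {x \<in> V1. \<phi> x \<in> \<phi> ` S} = S"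
  using inj unfolding inj_on_def by auto

lemma indep_number_eq: "indep_number V1 E1 = indep_number V2 E2"
proof (rule antisym)
  obtain J where J: "max_independent_set V1 E1 J"
    using max_independent_set_exists[OF finite_V1] by blast
  then show "indep_number V1 E1 \<le> indep_number V2 E2"
    using card_le_indep_number[OF finite_V2 independent_set_image] card_image
    by (metis max_independent_set_def max_independent_set_subset)
  obtain K where K: "max_independent_set V2 E2 K"
    using max_independent_set_exists[OF finite_V2] by blast
  then show "indep_number V2 E2 \<le> indep_number V1 E1"
    using card_le_indep_number[OF finite_V1 independent_set_vimage] card_vimage
    by (metis max_independent_set_def max_independent_set_subset)
qed

lemma max_independent_set_image:
  assumes "max_independent_set V1 E1 S"
  shows "max_independent_set V2 E2 (\<phi> ` S)"
  using assms independent_set_image card_image[OF max_independent_set_subset[OF assms]]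
    indep_number_eq
  by (simp add: max_independent_set_def)

lemma max_independent_set_vimage:
  assumes "max_independent_set V2 E2 S"
  shows "max_independent_set V1 E1 {x \<in> V1. \<phi> x \<in> S}"
  using assms independent_set_vimage card_vimage[OF max_independent_set_subset[OF assms]]
    indep_number_eq
  by (simp add: max_independent_set_def)

end

lemma graph_iso_automorphism:
  "finite V \<Longrightarrow> graph_automorphism V E f \<Longrightarrow> graph_iso V E V E f"
  unfolding graph_automorphism_def by unfold_locales auto

section \<open>Vertex-transitive graphs\<close>

definition nbhd :: "'v set \<Rightarrow> ('v \<Rightarrow> 'v \<Rightarrow> bool) \<Rightarrow> 'v set \<Rightarrow> 'v set" where
  "nbhd V E A = {x \<in> V. \<exists>a\<in>A. E a x}"

definition closed_nbhd :: "'v set \<Rightarrow> ('v \<Rightarrow> 'v \<Rightarrow> bool) \<Rightarrow> 'v set \<Rightarrow> 'v set" where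
  "closed_nbhd V E A = A \<union> nbhd V E A"

text \<open>Products of simple graphs are not simple in the sense of \<open>simple_graph\<close>, since
  \<open>prod_E\<close> also relates tuples outside \<open>prod_V\<close>; the product lemmas below therefore only
  assume finiteness and symmetry on the vertex set.\<close>
definition finite_sym_graph :: "'v set \<Rightarrow> ('v \<Rightarrow> 'v \<Rightarrow> bool) \<Rightarrow> bool" where
  "finite_sym_graph V E \<longleftrightarrow> finite V \<and> (\<forall>u\<in>V. \<forall>w\<in>V. E u w \<longrightarrow> E w u)"

definition nbhd_ratio_bound :: "'v set \<Rightarrow> ('v \<Rightarrow> 'v \<Rightarrow> bool) \<Rightarrow> bool" where
  "nbhd_ratio_bound V E \<longleftrightarrow> (\<forall>A. independent_set V E A \<longrightarrow>
      card A * card V \<le> indep_number V E * card (closed_nbhd V E A))"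

lemma closed_nbhd_subset: "A \<subseteq> V \<Longrightarrow> closed_nbhd V E A \<subseteq> V"
  by (auto simp: closed_nbhd_def nbhd_def)

lemma simple_graph_finite_sym: "simple_graph V E \<Longrightarrow> finite_sym_graph V E"
  unfolding simple_graph_def finite_sym_graph_def by blast

text \<open>Restricting to extensional maps makes the automorphism group a finite set.\<close>
definition Aut :: "'v set \<Rightarrow> ('v \<Rightarrow> 'v \<Rightarrow> bool) \<Rightarrow> ('v \<Rightarrow> 'v) set" where
  "Aut V E = {f \<in> V \<rightarrow>\<^sub>E V. graph_automorphism V E f}"

definition transporters :: "'v set \<Rightarrow> ('v \<Rightarrow> 'v \<Rightarrow> bool) \<Rightarrow> 'v \<Rightarrow> 'v \<Rightarrow> ('v \<Rightarrow> 'v) set" where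
  "transporters V E b a = {f \<in> Aut V E. f b = a}"

lemma finite_Aut: "finite V \<Longrightarrow> finite (Aut V E)"
  unfolding Aut_def by (rule finite_subset[OF _ finite_PiE]) auto

lemma restrict_in_Aut: "graph_automorphism V E f \<Longrightarrow> restrict f V \<in> Aut V E"
  unfolding Aut_def graph_automorphism_def
  by (auto simp: bij_betw_def inj_on_def intro!: restrict_PiE)

lemma AutD:
  assumes "f \<in> Aut V E"
  shows "graph_automorphism V E f" "bij_betw f V V" "f \<in> V \<rightarrow>\<^sub>E V"
  using assms unfolding Aut_def graph_automorphism_def by auto

lemma graph_automorphism_comp:
  assumes f: "graph_automorphism V E f" and g: "graph_automorphism V E g"
  shows "graph_automorphism V E (f \<circ> g)"
  unfolding graph_automorphism_def
proof (intro conjI ballI)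
  show "bij_betw (f \<circ> g) V V"
    using f g bij_betw_trans unfolding graph_automorphism_def by blast
  fix u w assume "u \<in> V" "w \<in> V"
  moreover have "g u \<in> V" "g w \<in> V"
    using g \<open>u \<in> V\<close> \<open>w \<in> V\<close> bij_betw_apply unfolding graph_automorphism_def by metis+
  ultimately have "E u w \<longleftrightarrow> E (g u) (g w)" "E (g u) (g w) \<longleftrightarrow> E (f (g u)) (f (g w))"
    using f g unfolding graph_automorphism_def by blast+
  then show "E u w \<longleftrightarrow> E ((f \<circ> g) u) ((f \<circ> g) w)" by simp
qed

lemma card_transporters_le:
  assumes fin: "finite V" and vt: "vertex_transitive V E"
    and V: "a \<in> V" "a' \<in> V" "b \<in> V" "b' \<in> V"
  shows "card (transporters V E b a) \<le> card (transporters V E b' a')"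
proof -
  obtain t s where t: "graph_automorphism V E t" "t a = a'"
    and s: "graph_automorphism V E s" "s b' = b"
    using vt V unfolding vertex_transitive_def by metis
  have bij: "bij_betw t V V" "bij_betw s V V" using t s unfolding graph_automorphism_def by auto
  let ?F = "\<lambda>f. restrict (t \<circ> f \<circ> s) V"
  have "inj_on ?F (transporters V E b a)"
  proof (rule inj_onI)
    fix f g assume "f \<in> transporters V E b a" "g \<in> transporters V E b a" and eq: "?F f = ?F g"
    then have f: "f \<in> V \<rightarrow>\<^sub>E V" and g: "g \<in> V \<rightarrow>\<^sub>E V"
      unfolding transporters_def by (auto dest: AutD(3))
    show "f = g"
    proof (rule PiE_ext[OF f g])
      fix x assume "x \<in> V"
      then obtain y where y: "y \<in> V" "s y = x" using bij(2) by (metis bij_betw_imp_surj_on imageE)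
      then have "t (f x) = t (g x)" using eq by (metis comp_apply restrict_apply')
      then show "f x = g x"
        using bij(1) f g \<open>x \<in> V\<close> by (metis PiE_mem bij_betw_imp_inj_on inj_onD)
    qed
  qed
  moreover have "?F ` transporters V E b a \<subseteq> transporters V E b' a'"
  proof
    fix h assume "h \<in> ?F ` transporters V E b a"
    then obtain f where f: "f \<in> Aut V E" "f b = a" and h: "h = ?F f"
      unfolding transporters_def by blast
    have "h \<in> Aut V E"
      unfolding h using t(1) AutD(1)[OF f(1)] s(1)
      by (intro restrict_in_Aut graph_automorphism_comp)
    then show "h \<in> transporters V E b' a'"
      using h f(2) t(2) s(2) V(4) by (simp add: transporters_def)
  qed
  ultimately show ?thesis
    using finite_Aut[OF fin] by (intro card_inj_on_le) (auto simp: transporters_def)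
qed

lemma card_transporters_eq:
  "finite V \<Longrightarrow> vertex_transitive V E \<Longrightarrow> a \<in> V \<Longrightarrow> a' \<in> V \<Longrightarrow> b \<in> V \<Longrightarrow> b' \<in> V \<Longrightarrow>
    card (transporters V E b a) = card (transporters V E b' a')"
  by (intro antisym card_transporters_le)

lemma sum_card_inter_Aut_image:
  assumes fin: "finite V" and vt: "vertex_transitive V E"
    and X: "X \<subseteq> V" and J: "J \<subseteq> V" and v: "v \<in> V"
  shows "(\<Sum>f\<in>Aut V E. card (X \<inter> f ` J)) = card X * card J * card (transporters V E v v)"
proof -
  have finAut: "finite (Aut V E)" using finite_Aut[OF fin] .
  have finX: "finite X" and finJ: "finite J" using X J fin finite_subset by auto
  have "(\<Sum>f\<in>Aut V E. card (X \<inter> f ` J)) = (\<Sum>f\<in>Aut V E. \<Sum>x\<in>X. if x \<in> f ` J then 1 else 0)"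
    using finX by (intro sum.cong) (simp_all add: sum.If_cases Int_def)
  also have "\<dots> = (\<Sum>x\<in>X. \<Sum>f\<in>Aut V E. if x \<in> f ` J then 1 else 0)"
    by (rule sum.swap)
  also have "\<dots> = (\<Sum>x\<in>X. card (\<Union>b\<in>J. transporters V E b x))"
    using finAut by (intro sum.cong) (auto simp: sum.If_cases transporters_def
        intro!: arg_cong[where f = card])
  also have "\<dots> = (\<Sum>x\<in>X. \<Sum>b\<in>J. card (transporters V E b x))"
  proof (intro sum.cong refl card_UN_disjoint[OF finJ])
    show "\<forall>b\<in>J. finite (transporters V E b x)" for x
      using finAut by (simp add: transporters_def)
    show "\<forall>b\<in>J. \<forall>b'\<in>J. b \<noteq> b' \<longrightarrow> transporters V E b x \<inter> transporters V E b' x = {}" for x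
      using J by (auto simp: transporters_def dest!: AutD(2) dest: bij_betw_imp_inj_on inj_onD)
  qed
  also have "\<dots> = (\<Sum>x\<in>X. \<Sum>b\<in>J. card (transporters V E v v))"
    using X J v by (intro sum.cong refl card_transporters_eq[OF fin vt]) auto
  finally show ?thesis by simp
qed

lemma card_le_card_closed_nbhd_inter:
  assumes G: "finite_sym_graph V E" and A: "independent_set V E A"
    and J: "max_independent_set V E J"
  shows "card A \<le> card (closed_nbhd V E A \<inter> J)"
proof -
  have fin: "finite V" and sym: "\<And>u w. u \<in> V \<Longrightarrow> w \<in> V \<Longrightarrow> E u w \<Longrightarrow> E w u"
    using G unfolding finite_sym_graph_def by auto
  have AV: "A \<subseteq> V" and JV: "J \<subseteq> V" and Jind: "independent_set V E J"
    using A J unfolding max_independent_set_def independent_set_def by auto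
  have finA: "finite A" and finJ: "finite J" using AV JV fin finite_subset by auto
  let ?U = "(J - closed_nbhd V E A) \<union> A"
  have "independent_set V E ?U"
    using A Jind AV JV sym unfolding independent_set_def closed_nbhd_def nbhd_def by blast
  then have "card ?U \<le> card J"
    using card_le_indep_number[OF fin] J by (simp add: max_independent_set_def)
  moreover have "card ?U = card (J - closed_nbhd V E A) + card A"
    using finA finJ by (intro card_Un_disjoint) (auto simp: closed_nbhd_def)
  ultimately have "card (J - closed_nbhd V E A) + card A \<le> card J" by simp
  moreover have "card J = card (closed_nbhd V E A \<inter> J) + card (J - closed_nbhd V E A)"
    using card_Int_Diff[OF finJ, of "closed_nbhd V E A"] by (simp add: Int_commute)
  ultimately show ?thesis by linarith
qed

lemma vertex_transitive_nbhd_ratio_bound: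
  assumes G: "finite_sym_graph V E" and vt: "vertex_transitive V E"
  shows "nbhd_ratio_bound V E"
  unfolding nbhd_ratio_bound_def
proof (intro allI impI)
  fix A assume A: "independent_set V E A"
  have fin: "finite V" using G unfolding finite_sym_graph_def by blast
  have AV: "A \<subseteq> V" using A unfolding independent_set_def by blast
  show "card A * card V \<le> indep_number V E * card (closed_nbhd V E A)"
  proof (cases "A = {}")
    case False
    then obtain v where v: "v \<in> V" using AV by blast
    obtain J where J: "max_independent_set V E J" using max_independent_set_exists[OF fin] .
    have JV: "J \<subseteq> V" using max_independent_set_subset[OF J] .
    define c where "c = card (transporters V E v v)"
    have "restrict id V \<in> transporters V E v v"
      using v by (auto simp: transporters_def graph_automorphism_def intro: restrict_in_Aut)
    then have "c > 0" using finite_Aut[OF fin] by (auto simp: c_def transporters_def card_gt_0_iff)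
    have "card (Aut V E) = card V * c"
    proof -
      have "(\<Sum>f\<in>Aut V E. card (V \<inter> f ` {v})) = card (Aut V E)"
        using v by (simp add: AutD(3)[THEN PiE_mem])
      then show ?thesis
        using sum_card_inter_Aut_image[OF fin vt subset_refl _ v, of "{v}"] v by (simp add: c_def)
    qed
    then have "card A * card V * c = (\<Sum>f\<in>Aut V E. card A)" by simp
    also have "\<dots> \<le> (\<Sum>f\<in>Aut V E. card (closed_nbhd V E A \<inter> f ` J))"
    proof (rule sum_mono)
      fix f assume "f \<in> Aut V E"
      then have "max_independent_set V E (f ` J)"
        using graph_iso.max_independent_set_image[OF graph_iso_automorphism[OF fin] J] AutD(1)
        by blast
      then show "card A \<le> card (closed_nbhd V E A \<inter> f ` J)"
        by (rule card_le_card_closed_nbhd_inter[OF G A])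
    qed
    also have "\<dots> = card (closed_nbhd V E A) * indep_number V E * c"
      using sum_card_inter_Aut_image[OF fin vt closed_nbhd_subset[OF AV] JV v] J
      by (simp add: c_def max_independent_set_def)
    finally show ?thesis using \<open>c > 0\<close> by (simp add: mult.commute)
  qed simp
qed

lemma exists_max_independent_set_avoiding:
  assumes G: "simple_graph V E" "nonempty_graph V E" and vt: "vertex_transitive V E"
    and J: "max_independent_set V E J"
  obtains a J' where "a \<in> J" "max_independent_set V E J'" "a \<notin> J'"
proof -
  have fin: "finite V" using G unfolding simple_graph_def by blast
  obtain a where "a \<in> V" using G(2) unfolding nonempty_graph_def by blast
  then have "independent_set V E {a}"
    using G(1) unfolding simple_graph_def independent_set_def by auto
  then have "J \<noteq> {}"
    using card_le_indep_number[OF fin] J by (force simp: max_independent_set_def)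
  then obtain a where a: "a \<in> J" by blast
  have "\<not> V \<subseteq> J"
    using J G(2) unfolding max_independent_set_def independent_set_def nonempty_graph_def by blast
  then obtain b where b: "b \<in> V" "b \<notin> J" by blast
  obtain f where f: "graph_automorphism V E f" "f b = a"
    using vt a b max_independent_set_subset[OF J] unfolding vertex_transitive_def by blast
  have "a \<notin> f ` J"
    using f b max_independent_set_subset[OF J] unfolding graph_automorphism_def bij_betw_def
    by (metis inj_on_image_mem_iff)
  then show ?thesis
    using that a graph_iso.max_independent_set_image[OF graph_iso_automorphism[OF fin f(1)] J]
    by blast
qed

section \<open>Zhang's theorem for two factors\<close>

definition direct_prod_E ::
  "('a \<Rightarrow> 'a \<Rightarrow> bool) \<Rightarrow> ('b \<Rightarrow> 'b \<Rightarrow> bool) \<Rightarrow> 'a \<times> 'b \<Rightarrow> 'a \<times> 'b \<Rightarrow> bool" where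
  "direct_prod_E EG EH p q \<longleftrightarrow> EG (fst p) (fst q) \<and> EH (snd p) (snd q)"

lemma sum_eq_card_mult_bound:
  fixes f :: "'a \<Rightarrow> nat"
  assumes "finite K" and le: "\<And>k. k \<in> K \<Longrightarrow> f k \<le> c"
    and sum: "(\<Sum>k\<in>K. f k) = card K * c" and k: "k \<in> K"
  shows "f k = c"
proof (rule ccontr)
  assume "f k \<noteq> c"
  then have "(\<Sum>k\<in>K. f k) < (\<Sum>k\<in>K. c)"
    using assms by (intro sum_strict_mono_ex1) (auto simp: order_less_le)
  then show False using sum by simp
qed

lemma card_UN_times_singleton:
  "finite K \<Longrightarrow> (\<And>v. v \<in> K \<Longrightarrow> finite (F v)) \<Longrightarrow>
    card (\<Union>v\<in>K. F v \<times> {v}) = (\<Sum>v\<in>K. card (F v))"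
  by (subst card_UN_disjoint) auto

lemma connected_graph_const:
  assumes conn: "connected_graph V E" and "u \<in> V" "w \<in> V"
    and step: "\<And>x y. x \<in> V \<Longrightarrow> y \<in> V \<Longrightarrow> E x y \<Longrightarrow> f y = f x"
  shows "f w = f u"
proof -
  have "(\<lambda>x y. x \<in> V \<and> y \<in> V \<and> E x y)\<^sup>*\<^sup>* u w"
    using assms unfolding connected_graph_def by blast
  then show ?thesis by (induction rule: rtranclp_induct) (auto dest: step)
qed

lemma not_connected_graph_split:
  assumes sym: "\<And>u w. u \<in> V \<Longrightarrow> w \<in> V \<Longrightarrow> E u w \<Longrightarrow> E w u"
    and "\<not> connected_graph V E"
  obtains C u w where "C \<subseteq> V" "u \<in> C" "w \<in> V - C"
    "\<And>x y. x \<in> V \<Longrightarrow> y \<in> V \<Longrightarrow> E x y \<Longrightarrow> x \<in> C \<longleftrightarrow> y \<in> C"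
proof -
  let ?R = "\<lambda>x y. x \<in> V \<and> y \<in> V \<and> E x y"
  obtain u w where "u \<in> V" "w \<in> V" "\<not> ?R\<^sup>*\<^sup>* u w"
    using assms(2) unfolding connected_graph_def by blast
  moreover have "?R\<^sup>*\<^sup>* u x \<longleftrightarrow> ?R\<^sup>*\<^sup>* u y" if "x \<in> V" "y \<in> V" "E x y" for x y
  proof -
    have "?R x y" "?R y x" using that sym by auto
    then show ?thesis
      using rtranclp.rtrancl_into_rtrancl[of ?R u x y] rtranclp.rtrancl_into_rtrancl[of ?R u y x]
      by blast
  qed
  ultimately show ?thesis
    by (intro that[of "{z \<in> V. ?R\<^sup>*\<^sup>* u z}" u w]) auto
qed

text \<open>Split an independent set S of G \<times> H into the points S_G that have no
  G-neighbour in S within their H-fibre, and the rest S_H. The columns of S_G and the rows of S_H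
  are independent, and the sets N[col v] \<times> {v} and {u} \<times> N[row u] are pairwise disjoint, so the
  neighbourhood ratio bound in each factor bounds the size of S. If S attains the bound
  \<alpha>(G) |V(H)| and the ratio of H is smaller, all these estimates are tight: S_H is empty and
  every column is a maximum independent set with N[col v] = V(G), which forces the columns over
  adjacent vertices of H to agree.\<close>
locale direct_prod_indep_set =
  fixes VG :: "'a set" and EG and VH :: "'b set" and EH and S
  assumes G: "finite_sym_graph VG EG" and H: "finite_sym_graph VH EH"
    and ratio_G: "nbhd_ratio_bound VG EG" and ratio_H: "nbhd_ratio_bound VH EH"
    and S: "independent_set (VG \<times> VH) (direct_prod_E EG EH) S"
begin

abbreviation "\<alpha>G \<equiv> indep_number VG EG"
abbreviation "\<alpha>H \<equiv> indep_number VH EH"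

lemma finite_VG: "finite VG" and finite_VH: "finite VH"
  using G H unfolding finite_sym_graph_def by auto

lemma sym_G: "u \<in> VG \<Longrightarrow> w \<in> VG \<Longrightarrow> EG u w \<Longrightarrow> EG w u"
  and sym_H: "v \<in> VH \<Longrightarrow> v' \<in> VH \<Longrightarrow> EH v v' \<Longrightarrow> EH v' v"
  using G H unfolding finite_sym_graph_def by auto

lemma S_subset: "S \<subseteq> VG \<times> VH"
  using S unfolding independent_set_def by blast

lemma S_nonadjacent: "(u, v) \<in> S \<Longrightarrow> (u', v') \<in> S \<Longrightarrow> EG u u' \<Longrightarrow> EH v v' \<Longrightarrow> False"
  using S unfolding independent_set_def direct_prod_E_def by fastforce

definition "S_G = {(u, v) \<in> S. \<not> (\<exists>u'. (u', v) \<in> S \<and> EG u u')}"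
definition "S_H = S - S_G"
definition "col v = {u. (u, v) \<in> S_G}"
definition "row u = {v. (u, v) \<in> S_H}"
definition "shadow_G = (\<Union>v\<in>VH. closed_nbhd VG EG (col v) \<times> {v})"
definition "shadow_H = Sigma VG (\<lambda>u. closed_nbhd VH EH (row u))"

lemma S_H_nonadjacent: "(u, v) \<in> S_H \<Longrightarrow> (u, v') \<in> S \<Longrightarrow> EH v v' \<Longrightarrow> False"
  using S_nonadjacent S_subset sym_G unfolding S_H_def S_G_def by blast

lemma col_subset: "col v \<subseteq> VG" and row_subset: "row u \<subseteq> VH"
  using S_subset unfolding col_def row_def S_G_def S_H_def by auto

lemma independent_col: "independent_set VG EG (col v)"
  using col_subset unfolding independent_set_def col_def S_G_def by blast

lemma independent_row: "independent_set VH EH (row u)"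
  using row_subset S_H_nonadjacent unfolding independent_set_def row_def S_H_def by blast

lemma S_G_eq: "S_G = (\<Union>v\<in>VH. col v \<times> {v})"
  using S_subset unfolding col_def S_G_def by auto

lemma S_H_eq: "S_H = Sigma VG row"
  using S_subset unfolding row_def S_H_def by auto

lemma card_S_G: "card S_G = (\<Sum>v\<in>VH. card (col v))"
  unfolding S_G_eq using finite_VH finite_VG col_subset
  by (intro card_UN_times_singleton) (auto intro: finite_subset)

lemma card_S: "card S = card S_G + card S_H"
proof -
  have "finite S" using S_subset finite_VG finite_VH finite_subset by blast
  moreover have "S \<inter> S_G = S_G" unfolding S_G_def by blast
  ultimately show ?thesis using card_Int_Diff[of S S_G] unfolding S_H_def by simp
qed

lemma card_shadow_G: "card shadow_G = (\<Sum>v\<in>VH. card (closed_nbhd VG EG (col v)))"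
  unfolding shadow_G_def using finite_VH finite_VG closed_nbhd_subset[OF col_subset]
  by (intro card_UN_times_singleton) (auto intro: finite_subset)

lemma card_shadow_H: "card shadow_H = (\<Sum>u\<in>VG. card (closed_nbhd VH EH (row u)))"
  unfolding shadow_H_def using finite_VG finite_VH closed_nbhd_subset[OF row_subset]
  by (intro card_SigmaI) (auto intro: finite_subset)

lemma shadow_G_subset: "shadow_G \<subseteq> VG \<times> VH"
  unfolding shadow_G_def using closed_nbhd_subset[OF col_subset] by blast

lemma shadow_H_subset: "shadow_H \<subseteq> VG \<times> VH"
  unfolding shadow_H_def using closed_nbhd_subset[OF row_subset] by blast

lemma shadows_disjoint: "shadow_G \<inter> shadow_H = {}"
proof (intro equals0I)
  fix p assume "p \<in> shadow_G \<inter> shadow_H"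
  then obtain x y where p: "p = (x, y)" "x \<in> VG" "y \<in> VH"
    and x: "x \<in> col y \<or> (\<exists>u\<in>col y. EG u x)" and y: "y \<in> row x \<or> (\<exists>v\<in>row x. EH v y)"
    unfolding shadow_G_def shadow_H_def closed_nbhd_def nbhd_def by auto
  have in_S: "(u, v) \<in> S" if "u \<in> col v \<or> v \<in> row u" for u v
    using that unfolding col_def row_def S_G_def S_H_def by auto
  show False
    using x y
  proof (elim disjE bexE)
    assume "x \<in> col y" "y \<in> row x"
    then show False by (simp add: col_def row_def S_H_def)
  next
    fix v assume "x \<in> col y" "v \<in> row x" "EH v y"
    then show False using S_H_nonadjacent[of x v y] in_S[of x y] by (simp add: row_def)
  next
    fix u assume "u \<in> col y" "EG u x" "y \<in> row x"
    then show False using in_S[of x y] by (auto simp: col_def S_G_def)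
  next
    fix u v assume "u \<in> col y" "EG u x" "v \<in> row x" "EH v y"
    moreover have "v \<in> VH" using \<open>v \<in> row x\<close> row_subset by blast
    ultimately show False
      using S_nonadjacent[of u y x v] in_S[of u y] in_S[of x v] sym_H[of v y] p by blast
  qed
qed

lemma card_shadows_le: "card shadow_G + card shadow_H \<le> card VG * card VH"
proof -
  have "card shadow_G + card shadow_H = card (shadow_G \<union> shadow_H)"
    using shadows_disjoint shadow_G_subset shadow_H_subset finite_VG finite_VH
    by (intro card_Un_disjoint[symmetric]) (auto intro: finite_subset)
  also have "\<dots> \<le> card (VG \<times> VH)"
    using shadow_G_subset shadow_H_subset finite_VG finite_VH by (intro card_mono) auto
  finally show ?thesis by (simp add: card_cartesian_product)
qed

lemma card_S_G_le: "card S_G * card VG \<le> \<alpha>G * card shadow_G"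
proof -
  have "card S_G * card VG = (\<Sum>v\<in>VH. card (col v) * card VG)"
    by (simp add: card_S_G sum_distrib_right)
  also have "\<dots> \<le> (\<Sum>v\<in>VH. \<alpha>G * card (closed_nbhd VG EG (col v)))"
    using ratio_G independent_col by (intro sum_mono) (simp add: nbhd_ratio_bound_def)
  also have "\<dots> = \<alpha>G * card shadow_G"
    by (simp add: card_shadow_G sum_distrib_left)
  finally show ?thesis .
qed

lemma card_S_H_le: "card S_H * card VH \<le> \<alpha>H * card shadow_H"
proof -
  have "card S_H * card VH = (\<Sum>u\<in>VG. card (row u) * card VH)"
    unfolding S_H_eq using finite_VG finite_VH row_subset
    by (subst card_SigmaI) (auto simp: sum_distrib_right intro: finite_subset)
  also have "\<dots> \<le> (\<Sum>u\<in>VG. \<alpha>H * card (closed_nbhd VH EH (row u)))"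
    using ratio_H independent_row by (intro sum_mono) (simp add: nbhd_ratio_bound_def)
  also have "\<dots> = \<alpha>H * card shadow_H"
    by (simp add: card_shadow_H sum_distrib_left)
  finally show ?thesis .
qed

lemma card_S_weighted_le:
  "card S * (card VG * card VH) \<le> \<alpha>G * card VH * card shadow_G + \<alpha>H * card VG * card shadow_H"
proof -
  have "card S * (card VG * card VH) = card S_G * card VG * card VH + card S_H * card VH * card VG"
    by (simp add: card_S algebra_simps)
  also have "\<dots> \<le> \<alpha>G * card shadow_G * card VH + \<alpha>H * card shadow_H * card VG"
    using card_S_G_le card_S_H_le by (intro add_mono mult_right_mono) auto
  finally show ?thesis by (simp add: ac_simps)
qed

lemma card_S_le: "card S \<le> max (\<alpha>G * card VH) (\<alpha>H * card VG)"
proof (cases "card VG * card VH = 0")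
  case True
  then have "S = {}" using S_subset finite_VG finite_VH by auto
  then show ?thesis by simp
next
  case False
  let ?m = "max (\<alpha>G * card VH) (\<alpha>H * card VG)"
  have "card S * (card VG * card VH)
      \<le> \<alpha>G * card VH * card shadow_G + \<alpha>H * card VG * card shadow_H"
    by (rule card_S_weighted_le)
  also have "\<dots> \<le> ?m * card shadow_G + ?m * card shadow_H"
    by (intro add_mono mult_right_mono) auto
  also have "\<dots> \<le> ?m * (card VG * card VH)"
    using card_shadows_le by (simp add: add_mult_distrib2[symmetric])
  finally show ?thesis using False by simp
qed

context
  assumes lt: "\<alpha>H * card VG < \<alpha>G * card VH" and extremal: "card S = \<alpha>G * card VH"
begin

lemma extremal_shadows: "S_H = {}" "card shadow_G = card VG * card VH"
proof -
  let ?K = "\<alpha>G * card VH" and ?L = "\<alpha>H * card VG"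
  have "?K * (card VG * card VH) \<le> ?K * card shadow_G + ?L * card shadow_H"
    using card_S_weighted_le extremal by (simp add: ac_simps)
  moreover have "?K * card shadow_G + ?K * card shadow_H \<le> ?K * (card VG * card VH)"
    using card_shadows_le by (simp add: add_mult_distrib2[symmetric])
  ultimately have "?K * card shadow_H \<le> ?L * card shadow_H" by linarith
  then have "card shadow_H = 0" using lt by (auto simp: mult_le_cancel2)
  then have "?K * (card VG * card VH) \<le> ?K * card shadow_G"
    using \<open>?K * (card VG * card VH) \<le> _\<close> by simp
  moreover have "?K > 0" using lt by linarith
  ultimately have le: "card VG * card VH \<le> card shadow_G" using mult_le_cancel1 by blast
  from \<open>card shadow_H = 0\<close> have "shadow_H = {}"
    using shadow_H_subset finite_VG finite_VH by (auto dest: finite_subset)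
  then show "S_H = {}"
    unfolding shadow_H_def S_H_eq closed_nbhd_def by auto
  show "card shadow_G = card VG * card VH"
    using le card_shadows_le by simp
qed

lemma extremal_closed_nbhd_col: "v \<in> VH \<Longrightarrow> closed_nbhd VG EG (col v) = VG"
proof -
  assume v: "v \<in> VH"
  have "card (closed_nbhd VG EG (col w)) \<le> card VG" for w
    using card_mono[OF finite_VG closed_nbhd_subset[OF col_subset]] .
  moreover have "(\<Sum>v\<in>VH. card (closed_nbhd VG EG (col v))) = card VH * card VG"
    using extremal_shadows(2) card_shadow_G by (simp add: mult.commute)
  ultimately have "card (closed_nbhd VG EG (col v)) = card VG"
    by (rule sum_eq_card_mult_bound[OF finite_VH _ _ v])
  then show ?thesis
    using finite_VG closed_nbhd_subset[OF col_subset] card_subset_eq by blast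
qed

lemma extremal_max_independent_col: "v \<in> VH \<Longrightarrow> max_independent_set VG EG (col v)"
proof -
  assume v: "v \<in> VH"
  have "card VG > 0" using lt indep_number_le_card[OF finite_VG, of EG] by (cases "card VG") auto
  then have le: "card (col w) \<le> \<alpha>G" if "w \<in> VH" for w
    using ratio_G independent_col extremal_closed_nbhd_col[OF that]
    unfolding nbhd_ratio_bound_def by (metis mult_le_cancel2 not_gr0)
  have "(\<Sum>w\<in>VH. card (col w)) = card VH * \<alpha>G"
    using card_S card_S_G extremal extremal_shadows(1) by (simp add: mult.commute)
  then have "card (col v) = \<alpha>G"
    using sum_eq_card_mult_bound[where f = "\<lambda>w. card (col w)", OF finite_VH le _ v] by blast
  then show ?thesis
    using independent_col by (simp add: max_independent_set_def)
qed

lemma extremal_col_adjacent: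
  assumes v: "v \<in> VH" and w: "w \<in> VH" and e: "EH v w"
  shows "col w = col v"
proof (rule card_subset_eq)
  show "finite (col v)" using col_subset finite_VG finite_subset by blast
  show "col w \<subseteq> col v"
  proof
    fix u' assume u': "u' \<in> col w"
    then have "u' \<in> closed_nbhd VG EG (col v)"
      using extremal_closed_nbhd_col[OF v] col_subset by blast
    moreover have "\<not> EG u u'" if "u \<in> col v" for u
      using S_nonadjacent[of u v u' w] that u' e by (auto simp: col_def S_G_def)
    ultimately show "u' \<in> col v" by (auto simp: closed_nbhd_def nbhd_def)
  qed
  show "card (col w) = card (col v)"
    using extremal_max_independent_col[OF v] extremal_max_independent_col[OF w]
    by (simp add: max_independent_set_def)
qed

lemma extremal_eq_times:
  assumes conn: "connected_graph VH EH"
  shows "\<exists>J. max_independent_set VG EG J \<and> S = J \<times> VH"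
proof -
  have "VH \<noteq> {}" using lt by (intro notI) simp
  then obtain v0 where v0: "v0 \<in> VH" by blast
  have col_eq: "col v = col v0" if "v \<in> VH" for v
    using connected_graph_const[OF conn v0 that] extremal_col_adjacent by blast
  have "S = S_G" using extremal_shadows(1) unfolding S_H_def S_G_def by blast
  also have "\<dots> = (\<Union>v\<in>VH. col v0 \<times> {v})" unfolding S_G_eq using col_eq by simp
  also have "\<dots> = col v0 \<times> VH" by auto
  finally have "S = col v0 \<times> VH" .
  then show ?thesis using extremal_max_independent_col[OF v0] by blast
qed

end

end

lemma independent_set_times_left:
  "independent_set VG EG J \<Longrightarrow> independent_set (VG \<times> VH) (direct_prod_E EG EH) (J \<times> VH)"
  by (auto simp: independent_set_def direct_prod_E_def)

lemma independent_set_times_right: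
  "independent_set VH EH J \<Longrightarrow> independent_set (VG \<times> VH) (direct_prod_E EG EH) (VG \<times> J)"
  by (auto simp: independent_set_def direct_prod_E_def)

context
  fixes VG :: "'a set" and EG and VH :: "'b set" and EH
  assumes G: "finite_sym_graph VG EG" and H: "finite_sym_graph VH EH"
    and ratio_G: "nbhd_ratio_bound VG EG" and ratio_H: "nbhd_ratio_bound VH EH"
begin

lemma direct_prod_indep_set_max:
  "max_independent_set (VG \<times> VH) (direct_prod_E EG EH) S \<Longrightarrow>
    direct_prod_indep_set VG EG VH EH S"
  using G H ratio_G ratio_H by unfold_locales (simp_all add: max_independent_set_def)

theorem indep_number_direct_prod:
  "indep_number (VG \<times> VH) (direct_prod_E EG EH) =
    max (indep_number VG EG * card VH) (indep_number VH EH * card VG)"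
proof (rule antisym)
  have fin: "finite VG" "finite VH" using G H by (auto simp: finite_sym_graph_def)
  then have finP: "finite (VG \<times> VH)" by simp
  obtain S where S: "max_independent_set (VG \<times> VH) (direct_prod_E EG EH) S"
    using max_independent_set_exists[OF finP] .
  then show "indep_number (VG \<times> VH) (direct_prod_E EG EH) \<le>
      max (indep_number VG EG * card VH) (indep_number VH EH * card VG)"
    using direct_prod_indep_set.card_S_le[OF direct_prod_indep_set_max]
    by (simp add: max_independent_set_def)
  obtain J where J: "max_independent_set VG EG J" using max_independent_set_exists[OF fin(1)] .
  obtain K where K: "max_independent_set VH EH K" using max_independent_set_exists[OF fin(2)] .
  have "card (J \<times> VH) \<le> indep_number (VG \<times> VH) (direct_prod_E EG EH)"
    using J independent_set_times_left[of VG EG J VH EH]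
    by (intro card_le_indep_number[OF finP]) (simp add: max_independent_set_def)
  moreover have "card (VG \<times> K) \<le> indep_number (VG \<times> VH) (direct_prod_E EG EH)"
    using K independent_set_times_right[of VH EH K VG EG]
    by (intro card_le_indep_number[OF finP]) (simp add: max_independent_set_def)
  ultimately
  show "max (indep_number VG EG * card VH) (indep_number VH EH * card VG) \<le>
      indep_number (VG \<times> VH) (direct_prod_E EG EH)"
    using J K by (simp add: max_independent_set_def card_cartesian_product ac_simps)
qed

lemma max_independent_set_times:
  assumes J: "max_independent_set VG EG J"
    and le: "indep_number VH EH * card VG \<le> indep_number VG EG * card VH"
  shows "max_independent_set (VG \<times> VH) (direct_prod_E EG EH) (J \<times> VH)"
  using J independent_set_times_left[of VG EG J VH EH] indep_number_direct_prod le
  by (simp add: max_independent_set_def card_cartesian_product)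

theorem max_independent_set_direct_prod_eq_times:
  assumes S_max: "max_independent_set (VG \<times> VH) (direct_prod_E EG EH) S"
    and lt: "indep_number VH EH * card VG < indep_number VG EG * card VH"
    and conn: "connected_graph VH EH"
  shows "\<exists>J. max_independent_set VG EG J \<and> S = J \<times> VH"
proof -
  interpret direct_prod_indep_set VG EG VH EH S
    using direct_prod_indep_set_max[OF S_max] .
  have "card S = indep_number (VG \<times> VH) (direct_prod_E EG EH)"
    using S_max by (simp add: max_independent_set_def)
  also have "\<dots> = indep_number VG EG * card VH"
    using indep_number_direct_prod lt by simp
  finally show ?thesis by (rule extremal_eq_times[OF lt _ conn])
qed

end

section \<open>Products of many factors\<close>

lemma finite_sym_graph_prod:
  assumes "finite K" "\<And>i. i \<in> K \<Longrightarrow> finite_sym_graph (V i) (E i)"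
  shows "finite_sym_graph (prod_V K V) (prod_E K E)"
  unfolding finite_sym_graph_def prod_V_def
proof (intro conjI ballI impI)
  show "finite (PiE K V)" using assms unfolding finite_sym_graph_def by (intro finite_PiE) auto
  fix u w assume "u \<in> PiE K V" "w \<in> PiE K V" "prod_E K E u w"
  then show "prod_E K E w u"
    using assms(2) unfolding prod_E_def finite_sym_graph_def by (meson PiE_mem)
qed

lemma graph_automorphism_prod:
  assumes F: "\<And>i. i \<in> K \<Longrightarrow> graph_automorphism (V i) (E i) (F i)"
  shows "graph_automorphism (prod_V K V) (prod_E K E) (\<lambda>z. restrict (\<lambda>i. F i (z i)) K)"
  unfolding graph_automorphism_def prod_V_def
proof (intro conjI ballI)
  have bij: "\<And>i. i \<in> K \<Longrightarrow> bij_betw (F i) (V i) (V i)"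
    using F unfolding graph_automorphism_def by blast
  show "bij_betw (\<lambda>z. restrict (\<lambda>i. F i (z i)) K) (PiE K V) (PiE K V)"
  proof (rule bij_betw_byWitness[where f' = "\<lambda>z. restrict (\<lambda>i. inv_into (V i) (F i) (z i)) K"])
    show "\<forall>z\<in>PiE K V. restrict (\<lambda>i. inv_into (V i) (F i) (restrict (\<lambda>i. F i (z i)) K i)) K = z"
      using bij by (auto simp: bij_betw_def PiE_iff extensional_def fun_eq_iff)
    show "\<forall>z\<in>PiE K V. restrict (\<lambda>i. F i (restrict (\<lambda>i. inv_into (V i) (F i) (z i)) K i)) K = z"
      using bij by (auto simp: bij_betw_def PiE_iff extensional_def fun_eq_iff f_inv_into_f)
    show "(\<lambda>z. restrict (\<lambda>i. F i (z i)) K) ` PiE K V \<subseteq> PiE K V"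
      using bij by (force simp: PiE_iff bij_betw_def)
    show "(\<lambda>z. restrict (\<lambda>i. inv_into (V i) (F i) (z i)) K) ` PiE K V \<subseteq> PiE K V"
      using bij by (force simp: PiE_iff bij_betw_def intro: inv_into_into)
  qed
  fix u w assume u: "u \<in> PiE K V" and w: "w \<in> PiE K V"
  have "E i (u i) (w i) \<longleftrightarrow> E i (F i (u i)) (F i (w i))" if "i \<in> K" for i
    using F[OF that] PiE_mem[OF u that] PiE_mem[OF w that] unfolding graph_automorphism_def by blast
  then show "prod_E K E u w \<longleftrightarrow> prod_E K E (restrict (\<lambda>i. F i (u i)) K) (restrict (\<lambda>i. F i (w i)) K)"
    unfolding prod_E_def by simp
qed

lemma vertex_transitive_prod:
  assumes vt: "\<And>i. i \<in> K \<Longrightarrow> vertex_transitive (V i) (E i)"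
  shows "vertex_transitive (prod_V K V) (prod_E K E)"
  unfolding vertex_transitive_def
proof (intro ballI)
  fix x y assume x: "x \<in> prod_V K V" and y: "y \<in> prod_V K V"
  have "\<forall>i\<in>K. \<exists>f. graph_automorphism (V i) (E i) f \<and> f (x i) = y i"
    using vt x y unfolding vertex_transitive_def prod_V_def by (meson PiE_mem)
  then obtain F where F: "\<And>i. i \<in> K \<Longrightarrow> graph_automorphism (V i) (E i) (F i) \<and> F i (x i) = y i"
    by metis
  moreover have "restrict (\<lambda>i. F i (x i)) K = y"
    using F y by (auto simp: prod_V_def PiE_iff extensional_def fun_eq_iff)
  ultimately show "\<exists>f. graph_automorphism (prod_V K V) (prod_E K E) f \<and> f x = y"
    using graph_automorphism_prod[of K V E F] by blast
qed

lemma graph_iso_prod_insert: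
  assumes i: "i \<notin> K" and fin: "finite (prod_V (insert i K) V)"
  shows "graph_iso (prod_V (insert i K) V) (prod_E (insert i K) E)
    (prod_V K V \<times> V i) (direct_prod_E (prod_E K E) (E i)) (\<lambda>x. (restrict x K, x i))"
proof
  show "bij_betw (\<lambda>x. (restrict x K, x i)) (prod_V (insert i K) V) (prod_V K V \<times> V i)"
    unfolding prod_V_def
  proof (rule bij_betw_byWitness[where f' = "\<lambda>(y, a). y(i := a)"])
    show "\<forall>x\<in>PiE (insert i K) V. (\<lambda>(y, a). y(i := a)) (restrict x K, x i) = x"
      by (auto simp: PiE_iff extensional_def fun_eq_iff)
    show "\<forall>p\<in>PiE K V \<times> V i. (\<lambda>x. (restrict x K, x i)) ((\<lambda>(y, a). y(i := a)) p) = p"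
      using i by (auto simp: PiE_iff extensional_def fun_eq_iff)
    show "(\<lambda>x. (restrict x K, x i)) ` PiE (insert i K) V \<subseteq> PiE K V \<times> V i"
      by (auto simp: PiE_iff)
    show "(\<lambda>(y, a). y(i := a)) ` (PiE K V \<times> V i) \<subseteq> PiE (insert i K) V"
      by (auto simp: PiE_iff extensional_def split: if_splits)
  qed
qed (use fin in \<open>auto simp: prod_E_def direct_prod_E_def\<close>)

lemma graph_iso_prod_singleton:
  assumes "finite (V i)"
  shows "graph_iso (prod_V {i} V) (prod_E {i} E) (V i) (E i) (\<lambda>x. x i)"
proof
  show "bij_betw (\<lambda>x. x i) (prod_V {i} V) (V i)"
    unfolding prod_V_def
    by (rule bij_betw_byWitness[where f' = "\<lambda>a. restrict (\<lambda>_. a) {i}"])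
      (auto simp: PiE_iff extensional_def fun_eq_iff split: if_splits)
  show "finite (prod_V {i} V)" using assms unfolding prod_V_def by (intro finite_PiE) auto
qed (simp add: prod_E_def)

lemma fun_upd_in_PiE_same: "f \<in> PiE S T \<Longrightarrow> x \<in> S \<Longrightarrow> y \<in> T x \<Longrightarrow> f(x := y) \<in> PiE S T"
  using PiE_fun_upd[of y T x f S] by (simp add: insert_absorb)

lemma card_PiE_two_coordinates:
  assumes "finite I" "a \<in> I" "b \<in> I" "a \<noteq> b" "X \<subseteq> V a" "Y \<subseteq> V b"
  shows "card {x \<in> PiE I V. x a \<in> X \<and> x b \<in> Y} = card X * card Y * (\<Prod>i\<in>I - {a} - {b}. card (V i))"
proof -
  have "{x \<in> PiE I V. x a \<in> X \<and> x b \<in> Y} = PiE I ((V(a := X))(b := Y))"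
    using assms by (fastforce simp: PiE_iff extensional_def split: if_splits)
  then have "card {x \<in> PiE I V. x a \<in> X \<and> x b \<in> Y} = (\<Prod>i\<in>I. card (((V(a := X))(b := Y)) i))"
    using assms(1) by (simp add: card_PiE)
  also have "\<dots> = card X * (\<Prod>i\<in>I - {a}. card (((V(a := X))(b := Y)) i))"
    using assms by (subst prod.remove[of _ a]) auto
  also have "\<dots> = card X * card Y * (\<Prod>i\<in>I - {a} - {b}. card (V i))"
    using assms by (subst prod.remove[of _ b]) (auto intro!: prod.cong)
  finally show ?thesis .
qed

section \<open>Factors ordered by independence ratio\<close>

definition indep_ratio :: "'v set \<Rightarrow> ('v \<Rightarrow> 'v \<Rightarrow> bool) \<Rightarrow> real" where
  "indep_ratio V E = real (indep_number V E) / real (card V)"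

lemma decreasing_after_gap:
  fixes q :: "nat \<Rightarrow> real"
  assumes gap: "q (l + 1) < q l" and decr: "\<And>i. i \<in> {l+1..<n} \<Longrightarrow> q (i + 1) \<le> q i"
    and i: "i \<in> {l+1..n}"
  shows "q i < q l"
proof -
  have "l + 1 \<le> i" "i \<le> n" using i by auto
  then show ?thesis
  proof (induction i rule: dec_induct)
    case (step i)
    then show ?case using decr[of i] by fastforce
  qed (use gap in simp)
qed

locale ratio_split_family =
  fixes V :: "nat \<Rightarrow> 'a set" and E :: "nat \<Rightarrow> 'a \<Rightarrow> 'a \<Rightarrow> bool" and n l :: nat
  assumes graphs: "\<And>i. i \<in> {1..n} \<Longrightarrow> simple_graph (V i) (E i)"
    and nonempty: "\<And>i. i \<in> {1..n} \<Longrightarrow> nonempty_graph (V i) (E i)"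
    and vt: "\<And>i. i \<in> {1..n} \<Longrightarrow> vertex_transitive (V i) (E i)"
    and l_range: "1 \<le> l" "l < n"
    and ratio_eq: "\<And>i. i \<in> {1..l} \<Longrightarrow> indep_ratio (V i) (E i) = indep_ratio (V 1) (E 1)"
    and ratio_lt: "\<And>i. i \<in> {l+1..n} \<Longrightarrow> indep_ratio (V i) (E i) < indep_ratio (V 1) (E 1)"
begin

abbreviation "PV m \<equiv> prod_V {1..m} V"
abbreviation "PE m \<equiv> prod_E {1..m} E"
abbreviation "r \<equiv> indep_ratio (V 1) (E 1)"

lemma finite_V: "i \<in> {1..n} \<Longrightarrow> finite (V i)"
  using graphs unfolding simple_graph_def by blast

lemma card_V_pos: "i \<in> {1..n} \<Longrightarrow> card (V i) > 0"
  using finite_V nonempty unfolding nonempty_graph_def by (auto simp: card_gt_0_iff)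

lemma ratio_le: "i \<in> {1..n} \<Longrightarrow> indep_ratio (V i) (E i) \<le> r"
  using ratio_eq[of i] ratio_lt[of i] by (cases "i \<le> l") auto

lemma finite_sym_V: "i \<in> {1..n} \<Longrightarrow> finite_sym_graph (V i) (E i)"
  using graphs simple_graph_finite_sym by blast

lemma nbhd_ratio_bound_V: "i \<in> {1..n} \<Longrightarrow> nbhd_ratio_bound (V i) (E i)"
  using finite_sym_V vt vertex_transitive_nbhd_ratio_bound by blast

lemma finite_sym_PV: "m \<le> n \<Longrightarrow> finite_sym_graph (PV m) (PE m)"
  using finite_sym_V by (intro finite_sym_graph_prod) auto

lemma finite_PV: "m \<le> n \<Longrightarrow> finite (PV m)"
  using finite_sym_PV unfolding finite_sym_graph_def by blast

lemma nbhd_ratio_bound_PV: "m \<le> n \<Longrightarrow> nbhd_ratio_bound (PV m) (PE m)"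
  using finite_sym_PV vt by (intro vertex_transitive_nbhd_ratio_bound vertex_transitive_prod) auto

lemma card_PV: "card (PV m) = (\<Prod>i\<in>{1..m}. card (V i))"
  unfolding prod_V_def by (simp add: card_PiE)

lemma card_PV_pos: "m \<le> n \<Longrightarrow> card (PV m) > 0"
  unfolding card_PV by (rule prod_pos) (use card_V_pos in auto)

lemma graph_iso_PV_Suc:
  "m < n \<Longrightarrow> graph_iso (PV (Suc m)) (PE (Suc m))
    (PV m \<times> V (Suc m)) (direct_prod_E (PE m) (E (Suc m))) (\<lambda>x. (restrict x {1..m}, x (Suc m)))"
  using graph_iso_prod_insert[of "Suc m" "{1..m}" V E] finite_PV[of "Suc m"]
  by (simp add: atLeastAtMostSuc_conv)

lemma indep_number_V:
  "i \<in> {1..n} \<Longrightarrow> real (indep_number (V i) (E i)) = indep_ratio (V i) (E i) * card (V i)"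
  using card_V_pos by (simp add: indep_ratio_def)

lemma indep_number_PV:
  assumes "1 \<le> m" "m \<le> n"
  shows "real (indep_number (PV m) (PE m)) = r * card (PV m)"
  using assms
proof (induction m rule: dec_induct)
  case base
  interpret graph_iso "PV 1" "PE 1" "V 1" "E 1" "\<lambda>x. x 1"
    using graph_iso_prod_singleton[of V 1 E] finite_V l_range by simp
  show ?case
    using indep_number_V[of 1] indep_number_eq bij_betw_same_card[OF bij] l_range by simp
next
  case (step m)
  have m: "m < n" and i: "Suc m \<in> {1..n}" using step by auto
  interpret graph_iso "PV (Suc m)" "PE (Suc m)" "PV m \<times> V (Suc m)"
    "direct_prod_E (PE m) (E (Suc m))" "\<lambda>x. (restrict x {1..m}, x (Suc m))"
    using graph_iso_PV_Suc[OF m] .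
  have "real (indep_number (PV (Suc m)) (PE (Suc m)))
      = max (real (indep_number (PV m) (PE m)) * card (V (Suc m)))
            (real (indep_number (V (Suc m)) (E (Suc m))) * card (PV m))"
    using indep_number_eq indep_number_direct_prod[OF finite_sym_PV finite_sym_V[OF i]
        nbhd_ratio_bound_PV nbhd_ratio_bound_V[OF i]] m
    by (simp add: of_nat_max)
  also have "\<dots> = r * (card (PV m) * card (V (Suc m)))"
  proof -
    have "indep_ratio (V (Suc m)) (E (Suc m)) * (card (V (Suc m)) * card (PV m))
        \<le> r * (card (V (Suc m)) * card (PV m))"
      using ratio_le[OF i] by (intro mult_right_mono) auto
    then show ?thesis
      using step.IH m indep_number_V[OF i] by (simp add: max_def ac_simps)
  qed
  also have "card (PV m) * card (V (Suc m)) = card (PV (Suc m))"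
    using bij_betw_same_card[OF bij] by (simp add: card_cartesian_product)
  finally show ?case .
qed

lemma indep_number_factor_lt:
  assumes "l \<le> m" "m < n"
  shows "indep_number (V (Suc m)) (E (Suc m)) * card (PV m) < indep_number (PV m) (PE m) * card (V (Suc m))"
proof -
  have i: "Suc m \<in> {1..n}" "Suc m \<in> {l+1..n}" using assms by auto
  have "indep_ratio (V (Suc m)) (E (Suc m)) * (card (V (Suc m)) * card (PV m))
      < r * (card (V (Suc m)) * card (PV m))"
    using ratio_lt[OF i(2)] card_V_pos[OF i(1)] card_PV_pos assms by simp
  then have "real (indep_number (V (Suc m)) (E (Suc m)) * card (PV m))
      < real (indep_number (PV m) (PE m) * card (V (Suc m)))"
    using indep_number_V[OF i(1)] indep_number_PV[of m] assms l_range by (simp add: ac_simps)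
  then show ?thesis by (simp only: of_nat_less_iff)
qed

definition cylinder :: "nat \<Rightarrow> (nat \<Rightarrow> 'a) set \<Rightarrow> (nat \<Rightarrow> 'a) set" where
  "cylinder m T = {x \<in> PV m. restrict x {1..l} \<in> T}"

lemma cylinder_self: "T \<subseteq> PV l \<Longrightarrow> cylinder l T = T"
  unfolding cylinder_def prod_V_def by auto

lemma cylinder_Suc:
  assumes "l \<le> m" "m < n"
  shows "{x \<in> PV (Suc m). (restrict x {1..m}, x (Suc m)) \<in> cylinder m T \<times> V (Suc m)}
    = cylinder (Suc m) T"
proof -
  have "restrict (restrict x {1..m}) {1..l} = restrict x {1..l}" for x :: "nat \<Rightarrow> 'a"
    using assms by (auto simp: restrict_def)
  moreover have "x \<in> PV (Suc m) \<Longrightarrow> restrict x {1..m} \<in> PV m \<and> x (Suc m) \<in> V (Suc m)" for x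
    unfolding prod_V_def by (auto simp: PiE_iff)
  ultimately show ?thesis unfolding cylinder_def by auto
qed

lemma max_independent_set_cylinder:
  assumes "l \<le> m" "m \<le> n" and T: "max_independent_set (PV l) (PE l) T"
  shows "max_independent_set (PV m) (PE m) (cylinder m T)"
  using assms(1,2)
proof (induction m rule: dec_induct)
  case base
  show ?case using T cylinder_self[OF max_independent_set_subset[OF T]] by simp
next
  case (step m)
  have m: "m < n" and i: "Suc m \<in> {1..n}" using step by auto
  interpret graph_iso "PV (Suc m)" "PE (Suc m)" "PV m \<times> V (Suc m)"
    "direct_prod_E (PE m) (E (Suc m))" "\<lambda>x. (restrict x {1..m}, x (Suc m))"
    using graph_iso_PV_Suc[OF m] .
  have "max_independent_set (PV m \<times> V (Suc m)) (direct_prod_E (PE m) (E (Suc m)))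
      (cylinder m T \<times> V (Suc m))"
    using max_independent_set_times[OF finite_sym_PV finite_sym_V[OF i]
        nbhd_ratio_bound_PV nbhd_ratio_bound_V[OF i] step.IH] indep_number_factor_lt[OF step(1) m] m
    by simp
  from max_independent_set_vimage[OF this] show ?case
    unfolding cylinder_Suc[OF step(1) m] .
qed

lemma max_independent_set_eq_cylinder:
  assumes conn: "\<And>k. k \<in> {l+1..n} \<Longrightarrow> connected_graph (V k) (E k)"
    and "l \<le> m" "m \<le> n" and "max_independent_set (PV m) (PE m) S"
  shows "\<exists>T. max_independent_set (PV l) (PE l) T \<and> S = cylinder m T"
  using assms(2-4)
proof (induction m arbitrary: S rule: dec_induct)
  case base
  then show ?case using cylinder_self[OF max_independent_set_subset] by metis
next
  case (step m)
  have m: "m < n" and i: "Suc m \<in> {1..n}" "Suc m \<in> {l+1..n}" using step by auto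
  interpret graph_iso "PV (Suc m)" "PE (Suc m)" "PV m \<times> V (Suc m)"
    "direct_prod_E (PE m) (E (Suc m))" "\<lambda>x. (restrict x {1..m}, x (Suc m))"
    using graph_iso_PV_Suc[OF m] .
  have "m \<le> n" using m by simp
  obtain J where J: "max_independent_set (PV m) (PE m) J"
    and image_eq: "(\<lambda>x. (restrict x {1..m}, x (Suc m))) ` S = J \<times> V (Suc m)"
    using max_independent_set_direct_prod_eq_times[OF finite_sym_PV[OF \<open>m \<le> n\<close>]
        finite_sym_V[OF i(1)] nbhd_ratio_bound_PV[OF \<open>m \<le> n\<close>] nbhd_ratio_bound_V[OF i(1)]
        max_independent_set_image[OF step.prems(2)] indep_number_factor_lt[OF step(1) m]
        conn[OF i(2)]]
    by blast
  obtain T where T: "max_independent_set (PV l) (PE l) T" and "J = cylinder m T"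
    using step.IH[OF \<open>m \<le> n\<close> J] by blast
  then have "S = cylinder (Suc m) T"
    using vimage_image_eq[OF max_independent_set_subset[OF step.prems(2)]] image_eq
      cylinder_Suc[OF step(1) m] by simp
  then show ?case using T by blast
qed

lemma MIS_normal_n_iff:
  "MIS_normal {1..n} V E \<longleftrightarrow> (\<forall>S. max_independent_set (PV n) (PE n) S \<longrightarrow>
     (\<exists>i\<in>{1..n}. \<exists>T. independent_set (V i) (E i) T \<and> S = {x \<in> PV n. x i \<in> T}))"
  using l_range unfolding MIS_normal_def by simp

lemma PV_nonempty: "m \<le> n \<Longrightarrow> PV m \<noteq> {}"
  using card_PV_pos by force

lemma not_independent_PV: "m \<le> n \<Longrightarrow> \<not> independent_set (PV m) (PE m) (PV m)"
proof
  assume "m \<le> n" "independent_set (PV m) (PE m) (PV m)"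
  have "\<forall>i\<in>{1..m}. \<exists>p. fst p \<in> V i \<and> snd p \<in> V i \<and> E i (fst p) (snd p)"
    using nonempty \<open>m \<le> n\<close> unfolding nonempty_graph_def by fastforce
  then obtain p where p: "\<And>i. i \<in> {1..m} \<Longrightarrow> fst (p i) \<in> V i \<and> snd (p i) \<in> V i \<and> E i (fst (p i)) (snd (p i))"
    by metis
  have "restrict (fst \<circ> p) {1..m} \<in> PV m" "restrict (snd \<circ> p) {1..m} \<in> PV m"
    "PE m (restrict (fst \<circ> p) {1..m}) (restrict (snd \<circ> p) {1..m})"
    using p by (auto simp: prod_V_def prod_E_def)
  then show False using \<open>independent_set (PV m) (PE m) (PV m)\<close> unfolding independent_set_def by blast
qed

lemma max_independent_set_PV_nonempty:
  assumes "1 \<le> m" "m \<le> n" "max_independent_set (PV m) (PE m) T"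
  shows "T \<noteq> {}"
proof -
  obtain x where "x \<in> PV m" using PV_nonempty assms by blast
  moreover have "\<not> E 1 a a" for a
    using graphs[of 1] l_range unfolding simple_graph_def by auto
  moreover have "\<not> PE m x x" unfolding prod_E_def using assms(1) \<open>\<And>a. \<not> E 1 a a\<close> by force
  ultimately have "independent_set (PV m) (PE m) {x}"
    by (simp add: independent_set_def)
  then show ?thesis
    using card_le_indep_number[OF finite_PV] assms by (force simp: max_independent_set_def)
qed

lemma restrict_PV: "x \<in> PV n \<Longrightarrow> restrict x {1..l} \<in> PV l"
  using l_range unfolding prod_V_def by (auto simp: PiE_iff)

lemma cylinder_coordinate:
  "i \<in> {1..l} \<Longrightarrow> cylinder n {y \<in> PV l. y i \<in> T} = {x \<in> PV n. x i \<in> T}"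
  unfolding cylinder_def using restrict_PV by auto

lemma max_independent_set_PV_l_coordinate:
  assumes normal: "MIS_normal {1..l} V E" and T: "max_independent_set (PV l) (PE l) T"
  shows "\<exists>i\<in>{1..l}. \<exists>T'. independent_set (V i) (E i) T' \<and> T = {y \<in> PV l. y i \<in> T'}"
proof (cases "l = 1")
  case True
  interpret graph_iso "PV 1" "PE 1" "V 1" "E 1" "\<lambda>y. y 1"
    using graph_iso_prod_singleton[of V 1 E] finite_V l_range by simp
  have T1: "max_independent_set (PV 1) (PE 1) T" using T True by simp
  show ?thesis
    using True T1 independent_set_image vimage_image_eq[OF max_independent_set_subset[OF T1]]
    by (auto simp: max_independent_set_def)
next
  case False
  then show ?thesis using normal T unfolding MIS_normal_def by simp
qed

theorem MIS_normal_if: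
  assumes normal: "MIS_normal {1..l} V E"
    and conn: "\<And>k. k \<in> {l+1..n} \<Longrightarrow> connected_graph (V k) (E k)"
  shows "MIS_normal {1..n} V E"
  unfolding MIS_normal_n_iff
proof (intro allI impI)
  fix S assume "max_independent_set (PV n) (PE n) S"
  then obtain T where T: "max_independent_set (PV l) (PE l) T" and S: "S = cylinder n T"
    using max_independent_set_eq_cylinder[OF conn less_imp_le[OF l_range(2)] order_refl] by blast
  then obtain i T' where "i \<in> {1..l}" "independent_set (V i) (E i) T'" "T = {y \<in> PV l. y i \<in> T'}"
    using max_independent_set_PV_l_coordinate[OF normal] by blast
  then show "\<exists>i\<in>{1..n}. \<exists>T. independent_set (V i) (E i) T \<and> S = {x \<in> PV n. x i \<in> T}"
    using S cylinder_coordinate l_range by (intro bexI[of _ i]) auto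
qed

definition glue :: "(nat \<Rightarrow> 'a) \<Rightarrow> (nat \<Rightarrow> 'a) \<Rightarrow> nat \<Rightarrow> 'a" where
  "glue y z j = (if j \<in> {1..l} then y j else z j)"

lemma glue_PV: "y \<in> PV l \<Longrightarrow> z \<in> PV n \<Longrightarrow> glue y z \<in> PV n"
  using l_range unfolding glue_def prod_V_def by (auto simp: PiE_iff extensional_def)

lemma glue_in_cylinder: "y \<in> PV l \<Longrightarrow> z \<in> PV n \<Longrightarrow> glue y z \<in> cylinder n T \<longleftrightarrow> y \<in> T"
proof -
  assume y: "y \<in> PV l" and z: "z \<in> PV n"
  have "restrict (glue y z) {1..l} = y"
    using y unfolding glue_def prod_V_def by (auto simp: PiE_iff extensional_def fun_eq_iff)
  then show ?thesis using glue_PV[OF y z] unfolding cylinder_def by simp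
qed

theorem MIS_normal_l_if_n:
  assumes normal: "MIS_normal {1..n} V E"
  shows "MIS_normal {1..l} V E"
proof (cases "l = 1")
  case False
  have "\<exists>i\<in>{1..l}. \<exists>T'. independent_set (V i) (E i) T' \<and> T = {y \<in> PV l. y i \<in> T'}"
    if T: "max_independent_set (PV l) (PE l) T" for T
  proof -
    have "max_independent_set (PV n) (PE n) (cylinder n T)"
      using max_independent_set_cylinder[OF _ _ T] l_range by simp
    then obtain i T' where "i \<in> {1..n}" and T': "independent_set (V i) (E i) T'"
      and S: "cylinder n T = {x \<in> PV n. x i \<in> T'}"
      using normal unfolding MIS_normal_n_iff by blast
    have i: "i \<in> {1..l}"
    proof (rule ccontr)
      assume "i \<notin> {1..l}"
      obtain y0 where y0: "y0 \<in> T"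
        using max_independent_set_PV_nonempty[OF _ _ T] l_range by auto
      have "x \<in> cylinder n T" if x: "x \<in> PV n" for x
      proof -
        have "glue y0 x \<in> cylinder n T"
          using glue_in_cylinder x y0 max_independent_set_subset[OF T] by blast
        moreover have "glue y0 x i = x i" using \<open>i \<notin> {1..l}\<close> unfolding glue_def by auto
        ultimately have "x i \<in> T'" using S by auto
        then show ?thesis using S x by blast
      qed
      then have "cylinder n T = PV n" unfolding cylinder_def by blast
      then show False
        using \<open>max_independent_set (PV n) (PE n) (cylinder n T)\<close> not_independent_PV
        by (simp add: max_independent_set_def)
    qed
    obtain z0 where z0: "z0 \<in> PV n" using PV_nonempty by blast
    have "y \<in> T \<longleftrightarrow> y i \<in> T'" if "y \<in> PV l" for y
      using glue_in_cylinder[OF that z0, of T] glue_PV[OF that z0] S i by (auto simp: glue_def)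
    then have "T = {y \<in> PV l. y i \<in> T'}" using max_independent_set_subset[OF T] by blast
    then show ?thesis using i T' by blast
  qed
  then show ?thesis using False by (simp add: MIS_normal_def)
qed (simp add: MIS_normal_def)

text \<open>Use J in the first coordinate on C and J' off C. Edges of G_k never cross the boundary
  of C, so this set is again independent; if J and J' differ, it is not a cylinder over one
  coordinate.\<close>
definition switch_set :: "nat \<Rightarrow> 'a set \<Rightarrow> 'a set \<Rightarrow> 'a set \<Rightarrow> (nat \<Rightarrow> 'a) set" where
  "switch_set k C J J' = {x \<in> PV n. if x k \<in> C then x 1 \<in> J else x 1 \<in> J'}"

lemma max_independent_switch_set:
  assumes k: "k \<in> {l+1..n}" and C: "C \<subseteq> V k"
    and C_closed: "\<And>x y. x \<in> V k \<Longrightarrow> y \<in> V k \<Longrightarrow> E k x y \<Longrightarrow> x \<in> C \<longleftrightarrow> y \<in> C"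
    and J: "max_independent_set (V 1) (E 1) J" and J': "max_independent_set (V 1) (E 1) J'"
  shows "max_independent_set (PV n) (PE n) (switch_set k C J J')"
proof (rule max_independent_setI[OF finite_PV[OF order_refl]])
  have k1: "k \<noteq> 1" "1 \<in> {1..n}" "k \<in> {1..n}" using k l_range by auto
  show "independent_set (PV n) (PE n) (switch_set k C J J')"
    unfolding independent_set_def
  proof (intro conjI ballI notI)
    fix x y assume x: "x \<in> switch_set k C J J'" and y: "y \<in> switch_set k C J J'" and "PE n x y"
    then have "E 1 (x 1) (y 1)" "E k (x k) (y k)" using k1 by (auto simp: prod_E_def)
    moreover have "x k \<in> V k" "y k \<in> V k" using x y k1 by (auto simp: switch_set_def prod_V_def)
    ultimately show False
      using x y J J' C_closed unfolding switch_set_def max_independent_set_def independent_set_def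
      by (metis (mono_tags, lifting) mem_Collect_eq)
  qed (auto simp: switch_set_def)
  define Q where "Q = (\<Prod>i\<in>{1..n} - {1} - {k}. card (V i))"
  have card_coords: "card {x \<in> PV n. x 1 \<in> X \<and> x k \<in> Y} = card X * card Y * Q"
    if "X \<subseteq> V 1" "Y \<subseteq> V k" for X Y
    unfolding prod_V_def Q_def using that k1 by (intro card_PiE_two_coordinates) auto
  let ?S1 = "{x \<in> PV n. x 1 \<in> J \<and> x k \<in> C}" and ?S2 = "{x \<in> PV n. x 1 \<in> J' \<and> x k \<in> V k - C}"
  have "switch_set k C J J' = ?S1 \<union> ?S2"
    using k1 by (auto simp: switch_set_def prod_V_def)
  moreover have "card (?S1 \<union> ?S2) = card ?S1 + card ?S2"
    using finite_PV[of n] by (intro card_Un_disjoint) auto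
  ultimately have "card (switch_set k C J J') = card J * card C * Q + card J' * card (V k - C) * Q"
    using card_coords[of J C] card_coords[of J' "V k - C"] C
      max_independent_set_subset[OF J] max_independent_set_subset[OF J']
    by simp
  also have "\<dots> = indep_number (V 1) (E 1) * card (V k) * Q"
    using J J' C finite_V[OF k1(3)] card_Diff_subset[of C "V k"] card_mono[of "V k" C]
    by (simp add: max_independent_set_def algebra_simps finite_subset)
  finally have card_switch: "card (switch_set k C J J') = indep_number (V 1) (E 1) * card (V k) * Q" .
  have "{x \<in> PV n. x 1 \<in> V 1 \<and> x k \<in> V k} = PV n"
    using k1 by (auto simp: prod_V_def)
  then have "real (indep_number (PV n) (PE n)) = r * card (V 1) * card (V k) * Q"
    using indep_number_PV[of n] card_coords[of "V 1" "V k"] l_range by simp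
  also have "\<dots> = indep_number (V 1) (E 1) * card (V k) * Q"
    using card_V_pos[OF k1(2)] by (simp add: indep_ratio_def)
  finally show "indep_number (PV n) (PE n) \<le> card (switch_set k C J J')"
    using card_switch by (simp only: of_nat_mult[symmetric] of_nat_eq_iff)
qed

theorem connected_if_MIS_normal:
  assumes normal: "MIS_normal {1..n} V E" and k: "k \<in> {l+1..n}"
  shows "connected_graph (V k) (E k)"
proof (rule ccontr)
  have k1: "k \<noteq> 1" "1 \<in> {1..n}" "k \<in> {1..n}" using k l_range by auto
  have sym: "\<And>x y. x \<in> V k \<Longrightarrow> y \<in> V k \<Longrightarrow> E k x y \<Longrightarrow> E k y x"
    using finite_sym_V[OF k1(3)] unfolding finite_sym_graph_def by blast
  assume not_conn: "\<not> connected_graph (V k) (E k)"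
  obtain C u w where C: "C \<subseteq> V k" "u \<in> C" "w \<in> V k - C"
    and C_closed: "\<And>x y. x \<in> V k \<Longrightarrow> y \<in> V k \<Longrightarrow> E k x y \<Longrightarrow> x \<in> C \<longleftrightarrow> y \<in> C"
    using not_connected_graph_split[OF sym not_conn] by blast
  obtain J where J: "max_independent_set (V 1) (E 1) J"
    using max_independent_set_exists finite_V[OF k1(2)] by blast
  then obtain a J' where a: "a \<in> J" "a \<notin> J'" and J': "max_independent_set (V 1) (E 1) J'"
    by (rule exists_max_independent_set_avoiding[OF graphs nonempty vt, OF k1(2) k1(2) k1(2)])
  obtain c where c: "c \<in> V 1" "c \<notin> J"
    using J nonempty[OF k1(2)] unfolding max_independent_set_def independent_set_def nonempty_graph_def
    by blast
  let ?S = "switch_set k C J J'"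
  obtain i T' where S: "?S = {x \<in> PV n. x i \<in> T'}"
    using normal max_independent_switch_set[OF k C(1) C_closed J J'] unfolding MIS_normal_n_iff by blast
  obtain z0 where z0: "z0 \<in> PV n" using PV_nonempty by blast
  let ?pt = "\<lambda>p q. (z0(1 := p))(k := q)"
  have pt: "?pt p q \<in> PV n" if "p \<in> V 1" "q \<in> V k" for p q
    using that z0 k1 unfolding prod_V_def by (intro fun_upd_in_PiE_same) auto
  have aV: "a \<in> V 1" and uV: "u \<in> V k" and wV: "w \<in> V k"
    using a(1) C max_independent_set_subset[OF J] by auto
  have "?pt a u \<in> ?S"
    using pt[OF aV uV] a C k1 by (simp add: switch_set_def)
  then have in_T': "?pt a u i \<in> T'" unfolding S by blast
  obtain y where y: "y \<in> PV n" "y i = ?pt a u i" "y \<notin> ?S"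
  proof (cases "i = k")
    case True
    then show ?thesis
      using that[OF pt[OF c(1) uV]] c C k1 by (simp add: switch_set_def)
  next
    case False
    then show ?thesis
      using that[OF pt[OF aV wV]] a C k1 by (simp add: switch_set_def)
  qed
  then show False using in_T' unfolding S by simp
qed

end

theorem proposition3p1:
  fixes V :: "nat \<Rightarrow> 'a set" and E :: "nat \<Rightarrow> 'a \<Rightarrow> 'a \<Rightarrow> bool"
    and n l :: nat
  assumes graphs: "\<And>i. i \<in> {1..n} \<Longrightarrow> simple_graph (V i) (E i)"
    and nonempty: "\<And>i. i \<in> {1..n} \<Longrightarrow> nonempty_graph (V i) (E i)"
    and vt: "\<And>i. i \<in> {1..n} \<Longrightarrow> vertex_transitive (V i) (E i)"
    and l_range: "1 \<le> l" "l < n"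
    and half: "real (indep_number (V 1) (E 1)) / real (card (V 1)) \<le> 1 / 2"
    and eq_first: "\<And>i. i \<in> {1..l} \<Longrightarrow>
        real (indep_number (V i) (E i)) / real (card (V i))
        = real (indep_number (V 1) (E 1)) / real (card (V 1))"
    and gap: "real (indep_number (V l) (E l)) / real (card (V l))
        > real (indep_number (V (l+1)) (E (l+1))) / real (card (V (l+1)))"
    and decr: "\<And>i. i \<in> {l+1..<n} \<Longrightarrow>
        real (indep_number (V i) (E i)) / real (card (V i))
        \<ge> real (indep_number (V (i+1)) (E (i+1))) / real (card (V (i+1)))"
  shows "MIS_normal {1..n} V E \<longleftrightarrow>
           (MIS_normal {1..l} V E \<and> (\<forall>i\<in>{l+1..n}. connected_graph (V i) (E i)))"
proof -
  interpret ratio_split_family V E n l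
  proof
    show "indep_ratio (V i) (E i) = indep_ratio (V 1) (E 1)" if "i \<in> {1..l}" for i
      using eq_first[OF that] by (simp add: indep_ratio_def)
    show "indep_ratio (V i) (E i) < indep_ratio (V 1) (E 1)" if "i \<in> {l+1..n}" for i
      using decreasing_after_gap[of "\<lambda>i. indep_ratio (V i) (E i)", OF _ _ that] gap decr
        eq_first[of l] l_range
      by (simp add: indep_ratio_def)
  qed (use graphs nonempty vt l_range in auto)
  show ?thesis
    using MIS_normal_l_if_n connected_if_MIS_normal MIS_normal_if by blast
qed

end
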